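(* Let $\mathcal P$ be a CPOS $2n$-gon, let $i,j$ be indices with $j\notin\{i-1,i,i+n-1,i+n\}$ (mod $2n$), and let $\lambda_0\in\mathbb R$ be such that $f_i(\lambda_0)\neq0$, the vertex $P_i(\lambda_0)$ lies in the relative interior of the edge $[P_j(\lambda_0),P_{j+1}(\lambda_0)]$ of $\mathcal P_{\lambda_0}$, and this crossing is transversal, i.e. $\lambda\mapsto[P_i(\lambda)-P_j(\lambda),e(j+\tfrac12)(\lambda)]$ has nonzero derivative at $\lambda_0$. For $\lambda$ near $\lambda_0$ let $\Gamma_-(\lambda)$ (resp. $\Gamma_+(\lambda)$) be the intersection of the segment $[P_j(\lambda),P_{j+1}(\lambda)]$ with $[P_{i-1}(\lambda),P_i(\lambda)]$ (resp. $[P_i(\lambda),P_{i+1}(\lambda)]$); these are the two branches of the equidistant symmetry set meeting at the vertex $P_i(\lambda_0)$. Then, for some $\epsilon>0$, all points of $\bigcup_{0<|\lambda-\lambda_0|<\epsilon}(\Gamma_-(\lambda)\cup\Gamma_+(\lambda))$ lie in one and the same open half-plane bounded by the great diagonal $d_i$ (the vertex is a cusp of the equidistant symmetry set) if and only if $f_i(\lambda_0)<0$, i.e. if and only if $P_i(\lambda_0)$ belongs to the central symmetry set.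
   Context: A CPOS $2n$-gon ($n\ge2$) is a closed planar polygon $\mathcal P$ with vertices $P_1,\dots,P_{2n}$ (indices mod $2n$) bounding a convex region, with no two adjacent sides parallel, with $P_{i+n+1}-P_{i+n}$ parallel to $P_{i+1}-P_i$ for all $i$, and positively oriented: $[P_{i+1}-P_i,P_{j+1}-P_j]>0$ for $1\le i<j\le n$ ($[\cdot,\cdot]$ = determinant). $d_i$ is the line through $P_i,P_{i+n}$; $D(i+\tfrac12)=d_i\cap d_{i+1}$; the central symmetry set is the closed polygon with vertices $D(1+\frac12),\dots,D(n+\frac12)$. The equidistant of level $\lambda\in\mathbb R$ is the polygon $\mathcal P_\lambda$ with vertices $P_i(\lambda)=P_i+\lambda(P_{i+n}-P_i)$ and edge vectors $e(i+\tfrac12)(\lambda)=P_{i+1}(\lambda)-P_i(\lambda)$; $f_i(\lambda)=[e(i-\tfrac12)(\lambda),e(i+\tfrac12)(\lambda)]$. The equidistant symmetry set is the set of self-intersection points of the equidistants $\mathcal P_\lambda$, $\lambda\in\mathbb R$ (points lying on two non-adjacent edges of the same $\mathcal P_\lambda$). *)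

theory Defs
  imports "HOL-Analysis.Analysis"
begin

text \<open>Planar points are complex numbers; [u,v] is the determinant.\<close>
definition det2 :: "complex \<Rightarrow> complex \<Rightarrow> real" where
  "det2 u v = Re u * Im v - Im u * Re v"

text \<open>Polygons: vertex functions on int indices, periodic mod 2n.\<close>
definition edgev :: "(int \<Rightarrow> complex) \<Rightarrow> int \<Rightarrow> complex" where
  "edgev P i = P (i + 1) - P i"

definition convex_polygon :: "nat \<Rightarrow> (int \<Rightarrow> complex) \<Rightarrow> bool" where
  "convex_polygon n P \<longleftrightarrow>
     (\<forall>i. P (i + 2 * int n) = P i) \<and>
     inj_on P {1 .. 2 * int n} \<and>
     (\<forall>i k. det2 (edgev P i) (P k - P i) \<ge> 0)"

definition CPOS :: "nat \<Rightarrow> (int \<Rightarrow> complex) \<Rightarrow> bool" where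
  "CPOS n P \<longleftrightarrow>
     n \<ge> 2 \<and>
     convex_polygon n P \<and>
     (\<forall>i. det2 (edgev P (i - 1)) (edgev P i) \<noteq> 0) \<and>
     (\<forall>i. det2 (edgev P (i + int n)) (edgev P i) = 0) \<and>
     (\<forall>i j. 1 \<le> i \<and> i < j \<and> j \<le> int n \<longrightarrow> det2 (edgev P i) (edgev P j) > 0)"

definition eqd :: "nat \<Rightarrow> (int \<Rightarrow> complex) \<Rightarrow> real \<Rightarrow> int \<Rightarrow> complex" where
  "eqd n P l i = P i + complex_of_real l * (P (i + int n) - P i)"

text \<open>e(i+1/2)(lambda)\<close>
definition eqd_edge :: "nat \<Rightarrow> (int \<Rightarrow> complex) \<Rightarrow> real \<Rightarrow> int \<Rightarrow> complex" where
  "eqd_edge n P l i = eqd n P l (i + 1) - eqd n P l i"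

definition fcurv :: "nat \<Rightarrow> (int \<Rightarrow> complex) \<Rightarrow> int \<Rightarrow> real \<Rightarrow> real" where
  "fcurv n P i l = det2 (eqd_edge n P l (i - 1)) (eqd_edge n P l i)"

definition diag_halfplane :: "nat \<Rightarrow> (int \<Rightarrow> complex) \<Rightarrow> int \<Rightarrow> real \<Rightarrow> complex set" where
  "diag_halfplane n P i s = {x. s * det2 (P (i + int n) - P i) (x - P i) > 0}"

end

theory Submission
  imports Defs
begin

(* Let Q(l) = P_i(l) be the moving vertex; it runs along the great diagonal d_i,
   Q(l) = P_i + l v with v = P_(i+n) - P_i.  Because opposite edges are parallel, every
   edge of the equidistant is a real multiple of the polygon edge: e(k+1/2)(l) = a_k(l) e_k,
   and f_i(l) = a_(i-1)(l) a_i(l) [e_(i-1), e_i] with [e_(i-1), e_i] > 0.  A point of the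
   branch Gamma_- is Q(l) - t a_(i-1)(l) e_(i-1) with t > 0, and by strict convexity
   [v, e_(i-1)] < 0, so it lies on the side sgn a_(i-1)(l0) of d_i; likewise Gamma_+ lies on
   the side -sgn a_i(l0).  Transversality makes the signed distance of Q(l) from the edge
   line change sign at l0, so both branches are nonempty arbitrarily close to l0.  Hence
   both lie in one half-plane iff sgn a_(i-1)(l0) = -sgn a_i(l0), i.e. iff f_i(l0) < 0. *)

lemma det2_add_left [simp]: "det2 (a + b) c = det2 a c + det2 b c"
  and det2_add_right [simp]: "det2 c (a + b) = det2 c a + det2 c b"
  and det2_diff_left [simp]: "det2 (a - b) c = det2 a c - det2 b c"
  and det2_diff_right [simp]: "det2 c (a - b) = det2 c a - det2 c b"
  and det2_minus_left [simp]: "det2 (- a) c = - det2 a c"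
  and det2_minus_right [simp]: "det2 c (- a) = - det2 c a"
  and det2_scale_left [simp]: "det2 (complex_of_real r * a) c = r * det2 a c"
  and det2_scale_right [simp]: "det2 c (complex_of_real r * a) = r * det2 c a"
  and det2_self [simp]: "det2 a a = 0"
  and det2_zero_left [simp]: "det2 0 a = 0"
  and det2_zero_right [simp]: "det2 a 0 = 0"
  by (simp_all add: det2_def algebra_simps)

lemma det2_swap: "det2 a b = - det2 b a"
  by (simp add: det2_def)

lemma continuous_det2 [continuous_intros]:
  "continuous F f \<Longrightarrow> continuous F g \<Longrightarrow> continuous F (\<lambda>x. det2 (f x) (g x))"
  unfolding det2_def by (intro continuous_intros continuous_Re continuous_Im)

lemma det2_eq_0_imp_parallel:
  assumes "det2 x y = 0" "y \<noteq> 0"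
  obtains c where "x = complex_of_real c * y"
proof
  have "x / y \<in> \<real>"
    using assms by (simp add: complex_is_Real_iff det2_def Im_divide field_simps)
  then show "x = complex_of_real (Re (x / y)) * y"
    using assms(2) by (metis Reals_cases Re_complex_of_real nonzero_eq_divide_eq)
qed

lemma cramer:
  assumes "det2 E W \<noteq> 0"
  shows "X = complex_of_real (det2 X W / det2 E W) * E + complex_of_real (det2 X E / det2 W E) * W"
proof -
  have "complex_of_real (det2 E W) * X
      = complex_of_real (det2 X W) * E + complex_of_real (det2 X E) * complex_of_real (- 1) * W"
    unfolding det2_def by (intro complex_eqI) (simp_all add: algebra_simps)
  then show ?thesis
    using assms det2_swap[of W E] by (simp add: field_simps)
qed

lemma closed_segment_param:
  "x \<in> closed_segment A B \<longleftrightarrow> (\<exists>u. 0 \<le> u \<and> u \<le> 1 \<and> x = A + complex_of_real u * (B - A))"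
  unfolding in_segment by (intro ex_cong1) (auto simp: scaleR_conv_of_real algebra_simps)

lemma open_segment_param:
  "x \<in> open_segment A B \<longleftrightarrow> A \<noteq> B \<and> (\<exists>u. 0 < u \<and> u < 1 \<and> x = A + complex_of_real u * (B - A))"
  unfolding in_segment by (intro conj_cong ex_cong1) (auto simp: scaleR_conv_of_real algebra_simps)

lemma crossing_point_form:
  assumes "x \<in> closed_segment J (J + W)" "x \<in> closed_segment (Q - E) Q"
    and "det2 (Q - J) W \<noteq> 0"
  obtains t where "0 < t" "x = Q - complex_of_real t * E"
proof -
  obtain u where u: "u \<le> 1" "x = Q - E + complex_of_real u * E"
    using assms(2) by (auto simp: closed_segment_param)
  obtain w where w: "x = J + complex_of_real w * W"
    using assms(1) by (auto simp: closed_segment_param)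
  have "u \<noteq> 1"
  proof
    assume "u = 1"
    then have "Q - J = complex_of_real w * W" using u(2) w by (simp add: algebra_simps)
    then show False using assms(3) by simp
  qed
  with u show thesis
    by (intro that[of "1 - u"]) (auto simp: algebra_simps)
qed

lemma crossing_point_exists:
  assumes "det2 E W \<noteq> 0"
    and "0 \<le> det2 (Q - J) W / det2 E W" "det2 (Q - J) W / det2 E W \<le> 1"
    and "0 \<le> det2 (Q - J) E / det2 W E" "det2 (Q - J) E / det2 W E \<le> 1"
  shows "closed_segment J (J + W) \<inter> closed_segment (Q - E) Q \<noteq> {}"
proof -
  define t where "t = det2 (Q - J) W / det2 E W"
  define u where "u = det2 (Q - J) E / det2 W E"
  have "Q - J = complex_of_real t * E + complex_of_real u * W"
    unfolding t_def u_def by (rule cramer[OF assms(1)])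
  then have on_edge: "Q - complex_of_real t * E = J + complex_of_real u * ((J + W) - J)"
    and on_side: "Q - complex_of_real t * E = (Q - E) + complex_of_real (1 - t) * (Q - (Q - E))"
    by (simp_all add: algebra_simps)
  have "0 \<le> u" "u \<le> 1" "0 \<le> 1 - t" "1 - t \<le> 1"
    using assms(2-5) unfolding t_def u_def by auto
  then have "Q - complex_of_real t * E \<in> closed_segment J (J + W) \<inter> closed_segment (Q - E) Q"
    unfolding Int_iff closed_segment_param using on_edge on_side by blast
  then show ?thesis by blast
qed

lemma sign_near_simple_zero:
  fixes g :: "real \<Rightarrow> real"
  assumes "(g has_real_derivative g') (at l0)" "g l0 = 0" "g' \<noteq> 0"
  shows "\<forall>\<^sub>F l in at l0. 0 < g l * (l - l0) * g'"
proof -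
  have "((\<lambda>l. (g l - g l0) / (l - l0) * g') \<longlongrightarrow> g' * g') (at l0)"
    using assms(1) unfolding has_field_derivative_iff by (intro tendsto_intros)
  moreover have "0 < g' * g'" using assms(3) by (auto simp: zero_less_mult_iff linorder_neq_iff)
  ultimately have "\<forall>\<^sub>F l in at l0. 0 < g l / (l - l0) * g'"
    using assms(2) order_tendstoD(1) by fastforce
  then show ?thesis
    using eventually_neq_at_within[of l0 l0 UNIV]
  proof eventually_elim
    case (elim l)
    have "0 < g l / (l - l0) * g' * (l - l0)\<^sup>2"
      using mult_pos_pos[OF elim(1), of "(l - l0)\<^sup>2"] elim(2) by simp
    also have "\<dots> = g l * (l - l0) * g'"
      using elim(2) by (simp add: field_simps power2_eq_square)
    finally show ?case .
  qed
qed

lemma frequently_at_if_eventually_one_side: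
  fixes l0 :: real
  assumes "(\<forall>\<^sub>F l in at_left l0. R l) \<or> (\<forall>\<^sub>F l in at_right l0. R l)"
  shows "\<exists>\<^sub>F l in at l0. R l"
proof -
  have "(\<exists>\<^sub>F l in at_left l0. R l) \<or> (\<exists>\<^sub>F l in at_right l0. R l)"
    using assms by (auto simp: eventually_frequently)
  then show ?thesis by (auto simp: frequently_def eventually_at_split)
qed

text \<open>Hence g D, with D continuous and nonzero at l0, is positive at points arbitrarily close
  to l0: on the side of l0 where (l - l0) g' D(l0) is positive.\<close>
lemma frequently_same_sign_near_simple_zero:
  fixes g D :: "real \<Rightarrow> real"
  assumes "(g has_real_derivative g') (at l0)" "g l0 = 0" "g' \<noteq> 0"
    and "isCont D l0" "D l0 \<noteq> 0"
  shows "\<exists>\<^sub>F l in at l0. 0 < g l * D l"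
proof -
  have "(\<lambda>l. D l * D l0) \<midarrow>l0\<rightarrow> D l0 * D l0"
    using assms(4) unfolding isCont_def by (intro tendsto_intros)
  moreover have "0 < D l0 * D l0" using assms(5) by (auto simp: zero_less_mult_iff linorder_neq_iff)
  ultimately have "\<forall>\<^sub>F l in at l0. 0 < D l * D l0"
    using order_tendstoD(1) by blast
  with sign_near_simple_zero[OF assms(1-3)]
  have near: "\<forall>\<^sub>F l in at l0. 0 < g l * D l * ((l - l0) * (g' * D l0))"
  proof eventually_elim
    case (elim l)
    have "0 < (g l * (l - l0) * g') * (D l * D l0)"
      using elim by simp
    also have "\<dots> = g l * D l * ((l - l0) * (g' * D l0))"
      by (simp add: algebra_simps)
    finally show ?case .
  qed
  have side: "(\<forall>\<^sub>F l in at_left l0. 0 < (l - l0) * (g' * D l0))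
      \<or> (\<forall>\<^sub>F l in at_right l0. 0 < (l - l0) * (g' * D l0))"
  proof (cases "0 < g' * D l0")
    case True
    have "\<forall>\<^sub>F l in at_right l0. 0 < (l - l0) * (g' * D l0)"
      using eventually_at_right_less[of l0] by eventually_elim (use True in simp)
    then show ?thesis ..
  next
    case False
    moreover have "g' * D l0 \<noteq> 0" using assms(3,5) by simp
    ultimately have "g' * D l0 < 0" by linarith
    have "\<forall>\<^sub>F l in at_left l0. l < l0"
      by (rule eventually_at_leftI[of "l0 - 1"]) auto
    then have "\<forall>\<^sub>F l in at_left l0. 0 < (l - l0) * (g' * D l0)"
      by eventually_elim (use \<open>g' * D l0 < 0\<close> in \<open>simp add: mult_neg_neg\<close>)
    then show ?thesis ..
  qed
  have pos: "\<forall>\<^sub>F l in F. 0 < g l * D l"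
    if "\<forall>\<^sub>F l in F. 0 < (l - l0) * (g' * D l0)"
      "\<forall>\<^sub>F l in F. 0 < g l * D l * ((l - l0) * (g' * D l0))" for F
    using that by eventually_elim (rule zero_less_mult_pos2)
  have "(\<forall>\<^sub>F l in at_left l0. 0 < g l * D l) \<or> (\<forall>\<^sub>F l in at_right l0. 0 < g l * D l)"
    using side near pos unfolding eventually_at_split by blast
  then show ?thesis by (rule frequently_at_if_eventually_one_side)
qed

text \<open>Abstract picture of one branch: a moving vertex Q(l) with incoming side [Q - E, Q]
  crosses the moving edge [J, J + W] transversally at parameter l0; g(l) is the signed
  distance of Q(l) from the line of the edge.\<close>
lemma crossing_branch_frequently_nonempty:
  fixes Q J W E :: "real \<Rightarrow> complex"
  assumes cont: "isCont Q l0" "isCont J l0" "isCont W l0" "isCont E l0"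
    and on_edge: "Q l0 \<in> open_segment (J l0) (J l0 + W l0)"
    and nonpar: "det2 (E l0) (W l0) \<noteq> 0"
    and transv: "((\<lambda>l. det2 (Q l - J l) (W l)) has_real_derivative g') (at l0)" "g' \<noteq> 0"
  shows "\<exists>\<^sub>F l in at l0. closed_segment (J l) (J l + W l) \<inter> closed_segment (Q l - E l) (Q l) \<noteq> {}"
proof -
  define g where "g = (\<lambda>l. det2 (Q l - J l) (W l))"
  define t where "t l = g l / det2 (E l) (W l)" for l
  define u where "u l = det2 (Q l - J l) (E l) / det2 (W l) (E l)" for l
  obtain u0 where u0: "0 < u0" "u0 < 1" and Q0: "Q l0 - J l0 = complex_of_real u0 * W l0"
    using on_edge by (auto simp: open_segment_param)
  have g0: "g l0 = 0"
    unfolding g_def by (simp only: Q0) simp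
  have nonpar': "det2 (W l0) (E l0) \<noteq> 0"
    using nonpar det2_swap[of "W l0" "E l0"] by simp
  have "isCont t l0"
    unfolding t_def g_def using nonpar cont by (intro continuous_intros) auto
  moreover have "isCont u l0"
    unfolding u_def using nonpar' cont by (intro continuous_intros) auto
  moreover have "t l0 = 0" "u l0 = u0"
    using g0 nonpar' by (simp_all add: t_def u_def Q0)
  ultimately have "\<forall>\<^sub>F l in at l0. t l < 1 \<and> 0 < u l \<and> u l < 1"
    using u0 unfolding isCont_def eventually_conj_iff by (auto intro: order_tendstoD)
  moreover have "\<exists>\<^sub>F l in at l0. 0 < g l * det2 (E l) (W l)"
  proof (rule frequently_same_sign_near_simple_zero[OF transv(1)[folded g_def] g0 transv(2)])
    show "isCont (\<lambda>l. det2 (E l) (W l)) l0" using cont by (intro continuous_intros)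
  qed (rule nonpar)
  ultimately have "\<exists>\<^sub>F l in at l0. 0 < g l * det2 (E l) (W l) \<and> t l < 1 \<and> 0 < u l \<and> u l < 1"
    by (simp add: frequently_eventually_frequently)
  then show ?thesis
  proof (rule frequently_elim1)
    fix l assume l: "0 < g l * det2 (E l) (W l) \<and> t l < 1 \<and> 0 < u l \<and> u l < 1"
    then have "0 < t l" "det2 (E l) (W l) \<noteq> 0"
      by (auto simp: t_def zero_less_mult_iff zero_less_divide_iff)
    with l show "closed_segment (J l) (J l + W l) \<inter> closed_segment (Q l - E l) (Q l) \<noteq> {}"
      unfolding t_def g_def u_def by (intro crossing_point_exists) auto
  qed
qed

lemma crossing_branch_eventually_behind_vertex:
  fixes Q J W E :: "real \<Rightarrow> complex"
  assumes transv: "((\<lambda>l. det2 (Q l - J l) (W l)) has_real_derivative g') (at l0)" "g' \<noteq> 0"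
    and cross: "det2 (Q l0 - J l0) (W l0) = 0"
  shows "\<forall>\<^sub>F l in at l0. \<forall>x \<in> closed_segment (J l) (J l + W l) \<inter> closed_segment (Q l - E l) (Q l).
           \<exists>t>0. x = Q l - complex_of_real t * E l"
  using sign_near_simple_zero[OF transv(1) cross transv(2)]
proof eventually_elim
  case (elim l)
  then have "det2 (Q l - J l) (W l) \<noteq> 0" by auto
  then show ?case by (blast elim: crossing_point_form)
qed

lemma crossing_branch_in_halfplane:
  fixes Q J W :: "real \<Rightarrow> complex" and c :: "real \<Rightarrow> real"
  assumes Q: "\<And>l. Q l = B + complex_of_real l * v"
    and c: "isCont c l0" "c l0 \<noteq> 0"
    and side: "0 < \<sigma> * (- c l0 * det2 v e)"
    and transv: "((\<lambda>l. det2 (Q l - J l) (W l)) has_real_derivative g') (at l0)" "g' \<noteq> 0"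
    and cross: "det2 (Q l0 - J l0) (W l0) = 0"
  shows "\<forall>\<^sub>F l in at l0. closed_segment (J l) (J l + W l)
           \<inter> closed_segment (Q l - complex_of_real (c l) * e) (Q l) \<subseteq> {x. 0 < \<sigma> * det2 v (x - B)}"
proof -
  have "(\<lambda>l. c l * c l0) \<midarrow>l0\<rightarrow> c l0 * c l0"
    using c(1) unfolding isCont_def by (intro tendsto_intros)
  moreover have csq: "0 < c l0 * c l0" using c(2) by (auto simp: zero_less_mult_iff linorder_neq_iff)
  ultimately have "\<forall>\<^sub>F l in at l0. 0 < c l * c l0"
    using order_tendstoD(1) by blast
  with crossing_branch_eventually_behind_vertex[OF transv cross, of "\<lambda>l. complex_of_real (c l) * e"]
  show ?thesis
  proof eventually_elim
    case (elim l)
    show ?case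
    proof
      fix x assume "x \<in> closed_segment (J l) (J l + W l) \<inter> closed_segment (Q l - complex_of_real (c l) * e) (Q l)"
      then obtain t where t: "0 < t" "x = Q l - complex_of_real t * (complex_of_real (c l) * e)"
        using elim(1) by blast
      have "0 < t * (c l * c l0) * (\<sigma> * (- c l0 * det2 v e))"
        using mult_pos_pos[OF mult_pos_pos[OF t(1) elim(2)] side] .
      also have "\<dots> = (c l0 * c l0) * (\<sigma> * det2 v (x - B))"
      proof -
        have "x - B = complex_of_real l * v - complex_of_real (t * c l) * e"
          by (simp add: t(2) Q)
        then have side_x: "det2 v (x - B) = - (t * c l) * det2 v e" by (simp add: mult.assoc)
        show ?thesis unfolding side_x by (simp add: algebra_simps)
      qed
      finally have "0 < \<sigma> * det2 v (x - B)"
        using csq by (rule zero_less_mult_pos)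
      then show "x \<in> {x. 0 < \<sigma> * det2 v (x - B)}" by simp
    qed
  qed
qed

lemma branches_on_common_side_iff:
  fixes H :: "real \<Rightarrow> 'a set" and A B :: "'b \<Rightarrow> 'a set"
  assumes opposite: "H 1 \<inter> H (-1) = {}" and sides: "\<sigma> \<in> {-1, 1}" "\<tau> \<in> {-1, 1}"
    and A: "\<exists>\<^sub>F l in F. A l \<noteq> {}" "\<forall>\<^sub>F l in F. A l \<subseteq> H \<sigma>"
    and B: "\<exists>\<^sub>F l in F. B l \<noteq> {}" "\<forall>\<^sub>F l in F. B l \<subseteq> H \<tau>"
  shows "(\<exists>s\<in>{-1, 1}. \<forall>\<^sub>F l in F. A l \<union> B l \<subseteq> H s) \<longleftrightarrow> \<sigma> = \<tau>"
proof
  assume "\<exists>s\<in>{-1, 1}. \<forall>\<^sub>F l in F. A l \<union> B l \<subseteq> H s"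
  then obtain s where s: "s \<in> {-1, 1}" and ev: "\<forall>\<^sub>F l in F. A l \<union> B l \<subseteq> H s" by blast
  have meet: "s = \<rho>" if "\<rho> \<in> {-1, 1}" "\<exists>\<^sub>F l in F. C l \<noteq> {}" "\<forall>\<^sub>F l in F. C l \<subseteq> H \<rho>"
    "\<forall>\<^sub>F l in F. C l \<subseteq> H s" for C :: "'b \<Rightarrow> 'a set" and \<rho>
  proof -
    have "\<exists>\<^sub>F l in F. C l \<noteq> {} \<and> C l \<subseteq> H \<rho> \<and> C l \<subseteq> H s"
      using that by (simp add: frequently_eventually_frequently eventually_conj_iff)
    then have "H \<rho> \<inter> H s \<noteq> {}" by (auto dest: frequently_ex)
    then show "s = \<rho>" using s that(1) opposite by auto
  qed
  have "s = \<sigma>" by (rule meet[OF sides(1) A]) (use ev in \<open>auto elim: eventually_mono\<close>)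
  moreover have "s = \<tau>" by (rule meet[OF sides(2) B]) (use ev in \<open>auto elim: eventually_mono\<close>)
  ultimately show "\<sigma> = \<tau>" by simp
next
  assume "\<sigma> = \<tau>"
  then show "\<exists>s\<in>{-1, 1}. \<forall>\<^sub>F l in F. A l \<union> B l \<subseteq> H s"
    using sides A(2) B(2) by (intro bexI[of _ \<sigma>]) (auto elim: eventually_elim2)
qed

lemma cpos_period: "CPOS n P \<Longrightarrow> P (x + 2 * int n) = P x"
  and cpos_inj: "CPOS n P \<Longrightarrow> inj_on P {1 .. 2 * int n}"
  and cpos_convex: "CPOS n P \<Longrightarrow> det2 (edgev P k) (P m - P k) \<ge> 0"
  and cpos_adjacent: "CPOS n P \<Longrightarrow> det2 (edgev P (k - 1)) (edgev P k) \<noteq> 0"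
  and cpos_opposite: "CPOS n P \<Longrightarrow> det2 (edgev P (k + int n)) (edgev P k) = 0"
  and cpos_orientation:
    "CPOS n P \<Longrightarrow> 1 \<le> a \<Longrightarrow> a < b \<Longrightarrow> b \<le> int n \<Longrightarrow> det2 (edgev P a) (edgev P b) > 0"
  and cpos_size: "CPOS n P \<Longrightarrow> n \<ge> 2"
  unfolding CPOS_def convex_polygon_def by blast+

text \<open>Edges are nondegenerate, since adjacent edges are not parallel.\<close>
lemma cpos_edge_nonzero: "CPOS n P \<Longrightarrow> edgev P k \<noteq> 0"
  using cpos_adjacent[of n P k] by (auto simp: det2_def)

lemma cpos_adjacent_pos:
  assumes "CPOS n P" shows "det2 (edgev P (k - 1)) (edgev P k) > 0"
proof -
  have "P (k + 1) - P (k - 1) = edgev P (k - 1) + edgev P k"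
    by (simp add: edgev_def)
  then have "det2 (edgev P (k - 1)) (edgev P k) \<ge> 0"
    using cpos_convex[OF assms, of "k - 1" "k + 1"] by simp
  then show ?thesis using cpos_adjacent[OF assms, of k] by linarith
qed

lemma cpos_vertex_on_edge_line:
  assumes cp: "CPOS n P" and on_line: "det2 (edgev P k) (P m - P k) = 0"
  obtains s where "0 \<le> s" "s \<le> 1" "P m - P k = complex_of_real s * edgev P k"
proof -
  have "det2 (P m - P k) (edgev P k) = 0"
    using on_line det2_swap[of "edgev P k" "P m - P k"] by (simp only: neg_equal_0_iff_equal)
  then obtain s where s: "P m - P k = complex_of_real s * edgev P k"
    using cpos_edge_nonzero[OF cp] by (rule det2_eq_0_imp_parallel)
  have "P m - P (k + 1) = complex_of_real (s - 1) * edgev P k"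
    using s by (simp add: edgev_def algebra_simps)
  then have "0 \<le> (s - 1) * det2 (edgev P (k + 1)) (edgev P k)"
    using cpos_convex[OF cp, of "k + 1" m] by (simp del: of_real_diff)
  moreover have "det2 (edgev P (k + 1)) (edgev P k) < 0"
    using cpos_adjacent_pos[OF cp, of "k + 1"] det2_swap[of "edgev P (k + 1)"] by simp
  ultimately have "s \<le> 1" by (simp add: mult_le_0_iff zero_le_mult_iff)
  have "P m - P (k - 1) = edgev P (k - 1) + complex_of_real s * edgev P k"
    using s by (simp add: edgev_def algebra_simps)
  then have "0 \<le> s * det2 (edgev P (k - 1)) (edgev P k)"
    using cpos_convex[OF cp, of "k - 1" m] by simp
  then have "0 \<le> s"
    using cpos_adjacent_pos[OF cp, of k] by (simp add: zero_le_mult_iff)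
  with \<open>s \<le> 1\<close> s show thesis using that by blast
qed

lemma cpos_vertex_inside_edge_parallel:
  assumes cp: "CPOS n P" and s: "0 < s" "s < 1" "P m - P k = complex_of_real s * edgev P k"
    and q: "q \<in> {m - 1, m}"
  shows "det2 (edgev P q) (edgev P k) = 0"
proof -
  have at_vertex: "det2 (edgev P q) (P m - P q) = 0"
    using q by (auto simp: edgev_def simp del: det2_diff_left det2_diff_right)
  have "P k - P q = (P m - P q) - complex_of_real s * edgev P k"
    and "P (k + 1) - P q = (P m - P q) + complex_of_real (1 - s) * edgev P k"
    using s(3) by (simp_all add: edgev_def algebra_simps)
  then have "0 \<le> - s * det2 (edgev P q) (edgev P k)"
    and "0 \<le> (1 - s) * det2 (edgev P q) (edgev P k)"
    using cpos_convex[OF cp, of q k] cpos_convex[OF cp, of q "k + 1"] at_vertex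
    by (simp_all del: of_real_diff)
  then show ?thesis using s(1,2) by (simp add: zero_le_mult_iff mult_le_0_iff)
qed

lemma cpos_strictly_left:
  assumes cp: "CPOS n P" and "P m \<noteq> P k" "P m \<noteq> P (k + 1)"
  shows "det2 (edgev P k) (P m - P k) > 0"
proof (rule ccontr)
  assume "\<not> ?thesis"
  then have "det2 (edgev P k) (P m - P k) = 0"
    using cpos_convex[OF cp, of k m] by linarith
  then obtain s where s: "0 \<le> s" "s \<le> 1" "P m - P k = complex_of_real s * edgev P k"
    by (rule cpos_vertex_on_edge_line[OF cp])
  have "s \<noteq> 0" "s \<noteq> 1"
    using s(3) assms(2,3) by (auto simp: edgev_def)
  then have inside: "0 < s" "s < 1" using s(1,2) by auto
  obtain c1 where "edgev P (m - 1) = complex_of_real c1 * edgev P k"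
    using cpos_vertex_inside_edge_parallel[OF cp inside s(3), of "m - 1"] cpos_edge_nonzero[OF cp]
    by (auto elim: det2_eq_0_imp_parallel)
  moreover obtain c2 where "edgev P m = complex_of_real c2 * edgev P k"
    using cpos_vertex_inside_edge_parallel[OF cp inside s(3), of m] cpos_edge_nonzero[OF cp]
    by (auto elim: det2_eq_0_imp_parallel)
  ultimately show False
    using cpos_adjacent[OF cp, of m] by simp
qed

lemma periodic_int:
  fixes f :: "int \<Rightarrow> 'a"
  assumes "\<And>x. f (x + M) = f x"
  shows "f (x + q * M) = f x"
proof (induct q rule: int_induct[where k = 0])
  case (step1 q)
  then show ?case using assms[of "x + q * M"] by (simp add: algebra_simps)
next
  case (step2 q)
  then show ?case using assms[of "x + (q - 1) * M"] by (simp add: algebra_simps)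
qed simp

lemma periodic_representative:
  fixes f :: "int \<Rightarrow> 'a"
  assumes "\<And>x. f (x + M) = f x" "0 < M"
  obtains r where "1 \<le> r" "r \<le> M" "M dvd (x - r)" "f x = f r"
proof
  define r where "r = (x - 1) mod M + 1"
  show "1 \<le> r" "r \<le> M"
    using pos_mod_sign[OF assms(2), of "x - 1"] pos_mod_bound[OF assms(2), of "x - 1"]
    unfolding r_def by linarith+
  have x: "x = r + ((x - 1) div M) * M"
    by (simp add: r_def algebra_simps)
  then show "M dvd (x - r)" by (metis add_diff_cancel_left' dvd_triv_right)
  show "f x = f r" by (subst x) (rule periodic_int[where f = f, OF assms(1)])
qed

lemma cpos_vertex_eq_imp_dvd:
  assumes cp: "CPOS n P" and eq: "P a = P b"
  shows "(2 * int n) dvd (a - b)"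
proof -
  have M: "0 < 2 * int n" using cpos_size[OF cp] by simp
  obtain ra where ra: "1 \<le> ra" "ra \<le> 2 * int n" "(2 * int n) dvd (a - ra)" "P a = P ra"
    using periodic_representative[where f = P, OF cpos_period[OF cp] M] .
  obtain rb where rb: "1 \<le> rb" "rb \<le> 2 * int n" "(2 * int n) dvd (b - rb)" "P b = P rb"
    using periodic_representative[where f = P, OF cpos_period[OF cp] M] .
  have "ra = rb"
    using cpos_inj[OF cp] ra rb eq unfolding inj_on_def by auto
  then have "a - b = (a - ra) - (b - rb)" by simp
  then show ?thesis using ra(3) rb(3) by (metis dvd_diff)
qed

text \<open>Parallelism to a fixed vector is n-periodic along the edges, because opposite edges
  are nonzero and parallel.\<close>
lemma cpos_edge_parallel_shift:
  assumes cp: "CPOS n P"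
  shows "(det2 (edgev P (x + int n)) w = 0) = (det2 (edgev P x) w = 0)"
proof -
  obtain c where c: "edgev P (x + int n) = complex_of_real c * edgev P x"
    using cpos_opposite[OF cp, of x] cpos_edge_nonzero[OF cp, of x]
    by (rule det2_eq_0_imp_parallel)
  then have "c \<noteq> 0" using cpos_edge_nonzero[OF cp, of "x + int n"] by auto
  then show ?thesis using c by simp
qed

lemma cpos_edge_parallel_representative:
  assumes cp: "CPOS n P"
  obtains r where "1 \<le> r" "r \<le> int n" "int n dvd (x - r)"
    "\<And>w. (det2 (edgev P x) w = 0) = (det2 (edgev P r) w = 0)"
proof -
  have "(\<lambda>w. det2 (edgev P (y + int n)) w = 0) = (\<lambda>w. det2 (edgev P y) w = 0)" for y
    using cpos_edge_parallel_shift[OF cp] by auto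
  moreover have "0 < int n" using cpos_size[OF cp] by simp
  ultimately obtain r where "1 \<le> r" "r \<le> int n" "int n dvd (x - r)"
    and "(\<lambda>w. det2 (edgev P x) w = 0) = (\<lambda>w. det2 (edgev P r) w = 0)"
    by (rule periodic_representative[where f = "\<lambda>y w. det2 (edgev P y) w = 0"])
  then show thesis by (intro that[of r]) (auto dest: fun_cong)
qed

text \<open>Edges are parallel only if their indices are congruent modulo n: the representatives
  in {1..n} are distinct, and distinct edges among e_1, ..., e_n turn strictly left.\<close>
lemma cpos_nonparallel:
  assumes cp: "CPOS n P" and nd: "\<not> int n dvd (a - b)"
  shows "det2 (edgev P a) (edgev P b) \<noteq> 0"
proof -
  obtain ra where ra: "1 \<le> ra" "ra \<le> int n" "int n dvd (a - ra)"
    and pa: "\<And>w. (det2 (edgev P a) w = 0) = (det2 (edgev P ra) w = 0)"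
    using cpos_edge_parallel_representative[OF cp, where x = a] by blast
  obtain rb where rb: "1 \<le> rb" "rb \<le> int n" "int n dvd (b - rb)"
    and pb: "\<And>w. (det2 (edgev P b) w = 0) = (det2 (edgev P rb) w = 0)"
    using cpos_edge_parallel_representative[OF cp, where x = b] by blast
  have "ra \<noteq> rb"
  proof
    assume "ra = rb"
    then have "a - b = (a - ra) - (b - rb)" by simp
    then show False using ra(3) rb(3) nd by (metis dvd_diff)
  qed
  then have reps: "det2 (edgev P ra) (edgev P rb) \<noteq> 0"
    using cpos_orientation[OF cp, of ra rb] cpos_orientation[OF cp, of rb ra] ra rb
      det2_swap[of "edgev P ra" "edgev P rb"]
    by (cases "ra < rb") (simp_all add: linorder_neq_iff)
  have "det2 (edgev P b) (edgev P ra) \<noteq> 0"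
    using pb[of "edgev P ra"] reps det2_swap[of "edgev P rb" "edgev P ra"] by simp
  then have "det2 (edgev P ra) (edgev P b) \<noteq> 0"
    using det2_swap[of "edgev P ra" "edgev P b"] by simp
  then show ?thesis using pa by simp
qed

text \<open>Every edge of an equidistant is a real multiple of the corresponding edge of the
  polygon, since opposite edges are parallel.  The factor is the edge scale.\<close>
definition edge_scale :: "nat \<Rightarrow> (int \<Rightarrow> complex) \<Rightarrow> int \<Rightarrow> real \<Rightarrow> real" where
  "edge_scale n P k l = Re (eqd_edge n P l k / edgev P k)"

lemma eqd_edge_eq: "eqd_edge n P l k = edgev P k + complex_of_real l * (edgev P (k + int n) - edgev P k)"
  by (simp add: eqd_edge_def eqd_def edgev_def algebra_simps)

lemma eqd_edge_scale:
  assumes cp: "CPOS n P"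
  shows "eqd_edge n P l k = complex_of_real (edge_scale n P k l) * edgev P k"
proof -
  obtain c where c: "edgev P (k + int n) = complex_of_real c * edgev P k"
    using cpos_opposite[OF cp, of k] cpos_edge_nonzero[OF cp, of k]
    by (rule det2_eq_0_imp_parallel)
  then have "eqd_edge n P l k = complex_of_real (1 - l + l * c) * edgev P k"
    by (simp add: eqd_edge_eq algebra_simps)
  then show ?thesis
    using cpos_edge_nonzero[OF cp, of k] by (simp add: edge_scale_def)
qed

text \<open>The edge scale is affine in the level, hence continuous.\<close>
lemma isCont_edge_scale: "isCont (\<lambda>l. edge_scale n P k l) x"
  unfolding edge_scale_def eqd_edge_eq divide_inverse by (intro continuous_intros continuous_Re)

lemma fcurv_scale:
  assumes "CPOS n P"
  shows "fcurv n P i l = edge_scale n P (i - 1) l * edge_scale n P i l * det2 (edgev P (i - 1)) (edgev P i)"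
  by (simp add: fcurv_def eqd_edge_scale[OF assms])

lemma cpos_diagonal_sides:
  assumes cp: "CPOS n P"
  shows "det2 (P (i + int n) - P i) (edgev P (i - 1)) < 0"
    and "det2 (P (i + int n) - P i) (edgev P i) < 0"
proof -
  have n: "2 \<le> n" using cpos_size[OF cp] .
  have distinct: "P (i + int n) \<noteq> P (i + d)" if "- 1 \<le> d" "d \<le> 1" for d
  proof
    assume "P (i + int n) = P (i + d)"
    then have "(2 * int n) dvd (int n - d)"
      using cpos_vertex_eq_imp_dvd[OF cp] by fastforce
    moreover have "0 < int n - d" "int n - d < 2 * int n" using that n by auto
    ultimately show False using zdvd_imp_le by fastforce
  qed
  have "det2 (edgev P (i - 1)) (P (i + int n) - P (i - 1)) > 0"
    using distinct[of "- 1"] distinct[of 0] by (intro cpos_strictly_left[OF cp]) auto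
  moreover have "P (i + int n) - P (i - 1) = (P (i + int n) - P i) + edgev P (i - 1)"
    by (simp add: edgev_def)
  ultimately show "det2 (P (i + int n) - P i) (edgev P (i - 1)) < 0"
    using det2_swap[of "P (i + int n) - P i" "edgev P (i - 1)"] by simp
  have "det2 (edgev P i) (P (i + int n) - P i) > 0"
    using distinct[of 0] distinct[of 1] by (intro cpos_strictly_left[OF cp]) auto
  then show "det2 (P (i + int n) - P i) (edgev P i) < 0"
    using det2_swap[of "P (i + int n) - P i" "edgev P i"] by simp
qed

lemma not_dvd_if_mod_ne:
  fixes N x j :: int
  assumes "j mod (2 * N) \<noteq> x mod (2 * N)" "j mod (2 * N) \<noteq> (x + N) mod (2 * N)"
  shows "\<not> N dvd (x - j)"
proof
  assume "N dvd (x - j)"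
  then obtain k where k: "x - j = N * k" by (auto simp: dvd_def)
  show False
  proof (cases "even k")
    case True
    then obtain m where "k = 2 * m" by (auto elim: evenE)
    then have "x - j = (2 * N) * m" using k by simp
    then show False using assms(1) by (metis mod_eq_dvd_iff dvd_triv_left)
  next
    case False
    then obtain m where "k = 2 * m + 1" by (auto elim: oddE)
    then have "x + N - j = (2 * N) * (m + 1)" using k by (simp add: algebra_simps)
    then show False using assms(2) by (metis mod_eq_dvd_iff dvd_triv_left)
  qed
qed

text \<open>The signed distance of a moving point from a moving line, both affine in the
  parameter, is a quadratic polynomial.\<close>
lemma det2_affine_has_derivative:
  "((\<lambda>l. det2 (A + complex_of_real l * B) (C + complex_of_real l * D)) has_real_derivative
     det2 A D + det2 B C + 2 * x * det2 B D) (at x)"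
proof -
  have "(\<lambda>l. det2 (A + complex_of_real l * B) (C + complex_of_real l * D))
      = (\<lambda>l. det2 A C + l * (det2 A D + det2 B C) + l\<^sup>2 * det2 B D)"
    by (simp add: fun_eq_iff det2_def algebra_simps power2_eq_square)
  then show ?thesis
    by (auto intro!: derivative_eq_intros)
qed

definition lower_branch :: "nat \<Rightarrow> (int \<Rightarrow> complex) \<Rightarrow> int \<Rightarrow> int \<Rightarrow> real \<Rightarrow> complex set" where
  "lower_branch n P i j l = closed_segment (eqd n P l j) (eqd n P l (j + 1))
     \<inter> closed_segment (eqd n P l (i - 1)) (eqd n P l i)"

definition upper_branch :: "nat \<Rightarrow> (int \<Rightarrow> complex) \<Rightarrow> int \<Rightarrow> int \<Rightarrow> real \<Rightarrow> complex set" where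
  "upper_branch n P i j l = closed_segment (eqd n P l j) (eqd n P l (j + 1))
     \<inter> closed_segment (eqd n P l i) (eqd n P l (i + 1))"

lemma diag_halfplanes_disjoint: "diag_halfplane n P i 1 \<inter> diag_halfplane n P i (- 1) = {}"
  by (auto simp: diag_halfplane_def)

lemma sgn_times_self_pos: "x \<noteq> 0 \<Longrightarrow> 0 < sgn x * (x :: real)"
  by (cases "0 < x") (auto simp: sgn_if)

locale vertex_edge_crossing =
  fixes n :: nat and P :: "int \<Rightarrow> complex" and i j :: int and l0 :: real
  assumes cpos: "CPOS n P"
    and j_ne: "j mod (2 * int n) \<notin> {(i - 1) mod (2 * int n), i mod (2 * int n),
                  (i + int n - 1) mod (2 * int n), (i + int n) mod (2 * int n)}"
    and f_ne: "fcurv n P i l0 \<noteq> 0"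
    and on_edge: "eqd n P l0 i \<in> open_segment (eqd n P l0 j) (eqd n P l0 (j + 1))"
    and transv: "deriv (\<lambda>l. det2 (eqd n P l i - eqd n P l j) (eqd_edge n P l j)) l0 \<noteq> 0"
begin

abbreviation "diag \<equiv> P (i + int n) - P i"

lemma vertex_on_diagonal: "eqd n P l i = P i + complex_of_real l * diag"
  by (simp add: eqd_def)

lemma eqd_next: "eqd n P l (k + 1) = eqd n P l k + eqd_edge n P l k"
  by (simp add: eqd_edge_def)

lemma isCont_eqd: "isCont (\<lambda>l. eqd n P l k) x" and isCont_eqd_edge: "isCont (\<lambda>l. eqd_edge n P l k) x"
  by (simp_all add: eqd_def eqd_edge_def)

lemma vertex_in_open_edge: "eqd n P l0 i \<in> open_segment (eqd n P l0 j) (eqd n P l0 j + eqd_edge n P l0 j)"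
  using on_edge by (simp add: eqd_next)

lemma crosses_at_l0: "det2 (eqd n P l0 i - eqd n P l0 j) (eqd_edge n P l0 j) = 0"
  using vertex_in_open_edge by (auto simp: open_segment_param)

lemma crossing_derivative:
  obtains g' where "((\<lambda>l. det2 (eqd n P l i - eqd n P l j) (eqd_edge n P l j)) has_real_derivative g') (at l0)"
    and "g' \<noteq> 0"
proof -
  define A B C D where "A = P i - P j" and "B = diag - (P (j + int n) - P j)"
    and "C = edgev P j" and "D = edgev P (j + int n) - edgev P j"
  have affine: "(\<lambda>l. det2 (eqd n P l i - eqd n P l j) (eqd_edge n P l j))
      = (\<lambda>l. det2 (A + complex_of_real l * B) (C + complex_of_real l * D))"
    by (simp add: fun_eq_iff eqd_def eqd_edge_eq A_def B_def C_def D_def algebra_simps)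
  have d: "((\<lambda>l. det2 (eqd n P l i - eqd n P l j) (eqd_edge n P l j)) has_real_derivative
      det2 A D + det2 B C + 2 * l0 * det2 B D) (at l0)"
    unfolding affine by (rule det2_affine_has_derivative)
  show thesis using transv unfolding DERIV_imp_deriv[OF d] by (rule that[OF d])
qed

lemma edge_scales_nonzero: "edge_scale n P (i - 1) l0 \<noteq> 0" "edge_scale n P i l0 \<noteq> 0" "edge_scale n P j l0 \<noteq> 0"
proof -
  show "edge_scale n P (i - 1) l0 \<noteq> 0" "edge_scale n P i l0 \<noteq> 0"
    using f_ne fcurv_scale[OF cpos] by auto
  have "eqd_edge n P l0 j \<noteq> 0"
    using vertex_in_open_edge by (auto simp: open_segment_param)
  then show "edge_scale n P j l0 \<noteq> 0"
    using eqd_edge_scale[OF cpos] by auto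
qed

lemma sides_transversal_to_edge:
  "det2 (edgev P (i - 1)) (edgev P j) \<noteq> 0" "det2 (edgev P i) (edgev P j) \<noteq> 0"
proof -
  have "j mod (2 * int n) \<noteq> (i - 1) mod (2 * int n)"
    "j mod (2 * int n) \<noteq> (i - 1 + int n) mod (2 * int n)"
    "j mod (2 * int n) \<noteq> i mod (2 * int n)"
    "j mod (2 * int n) \<noteq> (i + int n) mod (2 * int n)"
    using j_ne by (auto simp: algebra_simps)
  then have "\<not> int n dvd (i - 1 - j)" "\<not> int n dvd (i - j)"
    by (simp_all add: not_dvd_if_mod_ne)
  then show "det2 (edgev P (i - 1)) (edgev P j) \<noteq> 0" "det2 (edgev P i) (edgev P j) \<noteq> 0"
    by (simp_all add: cpos_nonparallel[OF cpos])
qed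

lemma branch_facts:
  fixes c :: "real \<Rightarrow> real" and e :: complex
  assumes c: "isCont c l0" "c l0 \<noteq> 0" and e: "det2 e (edgev P j) \<noteq> 0" "det2 diag e < 0"
  defines "\<Gamma> l \<equiv> closed_segment (eqd n P l j) (eqd n P l (j + 1))
              \<inter> closed_segment (eqd n P l i - complex_of_real (c l) * e) (eqd n P l i)"
  shows "\<exists>\<^sub>F l in at l0. \<Gamma> l \<noteq> {}"
    and "\<forall>\<^sub>F l in at l0. \<Gamma> l \<subseteq> diag_halfplane n P i (sgn (c l0))"
proof -
  obtain g' where g': "((\<lambda>l. det2 (eqd n P l i - eqd n P l j) (eqd_edge n P l j)) has_real_derivative g') (at l0)"
    "g' \<noteq> 0"
    by (rule crossing_derivative)
  have \<Gamma>: "\<Gamma> l = closed_segment (eqd n P l j) (eqd n P l j + eqd_edge n P l j)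
              \<inter> closed_segment (eqd n P l i - complex_of_real (c l) * e) (eqd n P l i)" for l
    unfolding \<Gamma>_def eqd_next ..
  have "det2 (complex_of_real (c l0) * e) (eqd_edge n P l0 j) \<noteq> 0"
    using c(2) e(1) edge_scales_nonzero(3) by (simp add: eqd_edge_scale[OF cpos])
  then show "\<exists>\<^sub>F l in at l0. \<Gamma> l \<noteq> {}"
    unfolding \<Gamma> using vertex_in_open_edge g' c(1)
    by (intro crossing_branch_frequently_nonempty continuous_intros isCont_eqd isCont_eqd_edge) auto
  have "0 < (sgn (c l0) * c l0) * (- det2 diag e)"
    by (rule mult_pos_pos[OF sgn_times_self_pos[OF c(2)]]) (use e(2) in simp)
  then have side: "0 < sgn (c l0) * (- c l0 * det2 diag e)"
    by (simp add: algebra_simps)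
  have "\<forall>\<^sub>F l in at l0. \<Gamma> l \<subseteq> {x. 0 < sgn (c l0) * det2 diag (x - P i)}"
    unfolding \<Gamma> by (rule crossing_branch_in_halfplane[OF vertex_on_diagonal c side g' crosses_at_l0])
  then show "\<forall>\<^sub>F l in at l0. \<Gamma> l \<subseteq> diag_halfplane n P i (sgn (c l0))"
    by (simp add: diag_halfplane_def)
qed

text \<open>Gamma_- lies on the side sgn a_(i-1)(l0), Gamma_+ on the side -sgn a_i(l0), where a_k is
  the edge scale; the incoming side vectors are a_(i-1)(l) e_(i-1) and -a_i(l) e_i.\<close>
lemma lower_branch_facts:
  "\<exists>\<^sub>F l in at l0. lower_branch n P i j l \<noteq> {}"
  "\<forall>\<^sub>F l in at l0. lower_branch n P i j l \<subseteq> diag_halfplane n P i (sgn (edge_scale n P (i - 1) l0))"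
proof -
  have "lower_branch n P i j l = closed_segment (eqd n P l j) (eqd n P l (j + 1))
      \<inter> closed_segment (eqd n P l i - complex_of_real (edge_scale n P (i - 1) l) * edgev P (i - 1)) (eqd n P l i)" for l
    using eqd_next[of l "i - 1"] by (simp add: lower_branch_def eqd_edge_scale[OF cpos])
  then show "\<exists>\<^sub>F l in at l0. lower_branch n P i j l \<noteq> {}"
    "\<forall>\<^sub>F l in at l0. lower_branch n P i j l \<subseteq> diag_halfplane n P i (sgn (edge_scale n P (i - 1) l0))"
    using branch_facts[OF isCont_edge_scale edge_scales_nonzero(1) sides_transversal_to_edge(1)
        cpos_diagonal_sides(1)[OF cpos]] by simp_all
qed

lemma upper_branch_facts:
  "\<exists>\<^sub>F l in at l0. upper_branch n P i j l \<noteq> {}"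
  "\<forall>\<^sub>F l in at l0. upper_branch n P i j l \<subseteq> diag_halfplane n P i (- sgn (edge_scale n P i l0))"
proof -
  have "upper_branch n P i j l = closed_segment (eqd n P l j) (eqd n P l (j + 1))
      \<inter> closed_segment (eqd n P l i - complex_of_real (- edge_scale n P i l) * edgev P i) (eqd n P l i)" for l
    using eqd_next[of l i] by (simp add: upper_branch_def eqd_edge_scale[OF cpos] closed_segment_commute)
  moreover have "isCont (\<lambda>l. - edge_scale n P i l) l0"
    by (intro continuous_intros isCont_edge_scale)
  moreover have "- edge_scale n P i l0 \<noteq> 0"
    using edge_scales_nonzero(2) by simp
  ultimately show "\<exists>\<^sub>F l in at l0. upper_branch n P i j l \<noteq> {}"
    "\<forall>\<^sub>F l in at l0. upper_branch n P i j l \<subseteq> diag_halfplane n P i (- sgn (edge_scale n P i l0))"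
    using branch_facts[of "\<lambda>l. - edge_scale n P i l", OF _ _ sides_transversal_to_edge(2)
        cpos_diagonal_sides(2)[OF cpos]] by (simp_all add: sgn_minus)
qed

end

lemma eventually_at_real_ex:
  fixes l0 :: real
  shows "(\<exists>\<epsilon>>0. \<exists>s\<in>S. \<forall>l. 0 < \<bar>l - l0\<bar> \<and> \<bar>l - l0\<bar> < \<epsilon> \<longrightarrow> R s l)
         \<longleftrightarrow> (\<exists>s\<in>S. \<forall>\<^sub>F l in at l0. R s l)"
  by (auto simp: eventually_at dist_real_def)

theorem mainTheorem7:
  fixes n :: nat and P :: "int \<Rightarrow> complex" and i j :: int and l0 :: real
  assumes cpos: "CPOS n P"
    and j_ne: "j mod (2 * int n) \<notin> {(i - 1) mod (2 * int n), i mod (2 * int n),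
                  (i + int n - 1) mod (2 * int n), (i + int n) mod (2 * int n)}"
    and f_ne: "fcurv n P i l0 \<noteq> 0"
    and on_edge: "eqd n P l0 i \<in> open_segment (eqd n P l0 j) (eqd n P l0 (j + 1))"
    and transv: "deriv (\<lambda>l. det2 (eqd n P l i - eqd n P l j) (eqd_edge n P l j)) l0 \<noteq> 0"
  shows "(\<exists>\<epsilon>>0. \<exists>s\<in>{-1, 1::real}. \<forall>l. 0 < \<bar>l - l0\<bar> \<and> \<bar>l - l0\<bar> < \<epsilon> \<longrightarrow>
            (closed_segment (eqd n P l j) (eqd n P l (j + 1)) \<inter>
               closed_segment (eqd n P l (i - 1)) (eqd n P l i))
            \<union> (closed_segment (eqd n P l j) (eqd n P l (j + 1)) \<inter>
               closed_segment (eqd n P l i) (eqd n P l (i + 1)))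
            \<subseteq> diag_halfplane n P i s)
         \<longleftrightarrow> fcurv n P i l0 < 0"
proof -
  interpret vertex_edge_crossing n P i j l0
    using assms by unfold_locales
  have "(\<exists>s\<in>{-1, 1}. \<forall>\<^sub>F l in at l0. lower_branch n P i j l \<union> upper_branch n P i j l
            \<subseteq> diag_halfplane n P i s)
        \<longleftrightarrow> sgn (edge_scale n P (i - 1) l0) = - sgn (edge_scale n P i l0)"
    using edge_scales_nonzero(1,2)
    by (intro branches_on_common_side_iff[OF diag_halfplanes_disjoint _ _ lower_branch_facts
          upper_branch_facts]) (auto simp: sgn_if)
  also have "\<dots> \<longleftrightarrow> edge_scale n P (i - 1) l0 * edge_scale n P i l0 < 0"
    using edge_scales_nonzero(1,2) by (auto simp: sgn_if mult_less_0_iff)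
  also have "\<dots> \<longleftrightarrow> fcurv n P i l0 < 0"
    using cpos_adjacent_pos[OF cpos, of i] by (simp add: fcurv_scale[OF cpos] mult_less_0_iff)
  finally show ?thesis
    unfolding eventually_at_real_ex lower_branch_def upper_branch_def .
qed

end
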